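(* Let $f:\mathbb{N}^d\to\mathbb{N}$ be obliviously-computable by a leaderless CRN. Then $f$ is superadditive: $f(\vec{x})+f(\vec{y})\le f(\vec{x}+\vec{y})$ for all $\vec{x},\vec{y}\in\mathbb{N}^d$.
   Context: A chemical reaction network (CRN) is a pair $(\mathcal{S},\mathcal{R})$ of a finite set of species and a finite set of reactions $(\vec{R},\vec{P})\in\mathbb{N}^{\mathcal{S}}\times\mathbb{N}^{\mathcal{S}}$. A configuration is $\vec{C}\in\mathbb{N}^{\mathcal{S}}$; a reaction is applicable if $\vec{R}\le\vec{C}$ and yields $\vec{C}-\vec{R}+\vec{P}$; reachability is via finite sequences of applicable reactions. A leaderless CRN computing $f:\mathbb{N}^d\to\mathbb{N}$ has input species $X_1,\ldots,X_d$ and output species $Y$; the initial configuration $\vec{I}_{\vec{x}}$ has $\vec{x}(i)$ copies of $X_i$ and zero of all other species. $\vec{C}$ is stable if all configurations reachable from it have the same count of $Y$. The CRN stably computes $f$ if for every $\vec{x}$ and every $\vec{C}$ reachable from $\vec{I}_{\vec{x}}$ some stable $\vec{O}$ reachable from $\vec{C}$ has $\vec{O}(Y)=f(\vec{x})$. It is output-oblivious if $Y$ is never a reactant. $f$ is obliviously-computable by a leaderless CRN if a leaderless output-oblivious CRN stably computes it. *)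

theory Defs
  imports "HOL-Analysis.Analysis"
begin

text \<open>The species set is the (finite) universe of the
type 's; configurations are vectors in N^S, i.e. functions 's => nat (compared
pointwise). A reaction is a pair (R, P) of reactant and product vectors; the CRN's
reaction set is a finite set of such pairs.\<close>

type_synonym 's config = "'s \<Rightarrow> nat"
type_synonym 's reaction = "'s config \<times> 's config"

definition applicable :: "'s reaction \<Rightarrow> 's config \<Rightarrow> bool" where
  "applicable r C \<longleftrightarrow> fst r \<le> C"

definition apply_rxn :: "'s reaction \<Rightarrow> 's config \<Rightarrow> 's config" where
  "apply_rxn r C = (\<lambda>s. C s - fst r s + snd r s)"

definition step :: "'s reaction set \<Rightarrow> 's config \<Rightarrow> 's config \<Rightarrow> bool" where
  "step Rs C D \<longleftrightarrow> (\<exists>r\<in>Rs. applicable r C \<and> D = apply_rxn r C)"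

definition reachable :: "'s reaction set \<Rightarrow> 's config \<Rightarrow> 's config \<Rightarrow> bool" where
  "reachable Rs = (step Rs)\<^sup>*\<^sup>*"

definition stable :: "'s reaction set \<Rightarrow> 's \<Rightarrow> 's config \<Rightarrow> bool" where
  "stable Rs Y C \<longleftrightarrow> (\<forall>D. reachable Rs C D \<longrightarrow> D Y = C Y)"

text \<open>Leaderless initial configuration: x(i) copies of X_i, zero of everything else.\<close>
definition init_config :: "('d \<Rightarrow> 's) \<Rightarrow> nat ^ 'd \<Rightarrow> 's config" where
  "init_config X x = (\<lambda>s. if \<exists>i. X i = s then x $ (THE i. X i = s) else 0)"

definition stably_computes ::
  "'s reaction set \<Rightarrow> ('d \<Rightarrow> 's) \<Rightarrow> 's \<Rightarrow> (nat ^ 'd \<Rightarrow> nat) \<Rightarrow> bool" where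
  "stably_computes Rs X Y f \<longleftrightarrow>
     (\<forall>x C. reachable Rs (init_config X x) C \<longrightarrow>
        (\<exists>Ofin. reachable Rs C Ofin \<and> stable Rs Y Ofin \<and> Ofin Y = f x))"

definition output_oblivious :: "'s reaction set \<Rightarrow> 's \<Rightarrow> bool" where
  "output_oblivious Rs Y \<longleftrightarrow> (\<forall>r\<in>Rs. fst r Y = 0)"

text \<open>A leaderless CRN with input species X_1..X_d (distinct) and output species Y
(distinct from the inputs), species are (w.l.o.g.) named by natural numbers, S the finite species set.\<close>
definition obliviously_computable :: "(nat ^ 'd \<Rightarrow> nat) \<Rightarrow> bool" where
  "obliviously_computable f \<longleftrightarrow>
     (\<exists>(Rs :: nat reaction set) (S :: nat set) (X :: 'd \<Rightarrow> nat) (Y :: nat).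
        finite S \<and> finite Rs \<and> inj X \<and> range X \<subseteq> S \<and> Y \<in> S \<and> Y \<notin> range X \<and>
        (\<forall>r\<in>Rs. \<forall>s. s \<notin> S \<longrightarrow> fst r s = 0 \<and> snd r s = 0) \<and>
        output_oblivious Rs Y \<and> stably_computes Rs X Y f)"

end

theory Submission
  imports Defs "HOL-Library.Function_Algebras"
begin

text \<open>Reactions need only their reactants to be present, so any execution stays valid when
  extra molecules are added. Hence from \<open>x + y\<close> the CRN can run the two executions that
  produce \<open>f x\<close> and \<open>f y\<close> side by side, reaching a configuration with \<open>f x + f y\<close> copies
  of \<open>Y\<close>. Since \<open>Y\<close> is never consumed, its count can only grow from there, and stable
  computation still reaches a stable configuration with \<open>f (x + y)\<close> copies of \<open>Y\<close>.\<close>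

lemma step_add_right:
  assumes "step Rs C D"
  shows "step Rs (C + E) (D + E)"
proof -
  from assms obtain r where r: "r \<in> Rs" "fst r \<le> C" "D = apply_rxn r C"
    unfolding step_def applicable_def by blast
  have "fst r \<le> C + E"
    using r(2) by (simp add: le_fun_def trans_le_add1)
  moreover have "D + E = apply_rxn r (C + E)"
  proof
    fix s
    have "fst r s \<le> C s"
      using r(2) by (simp add: le_fun_def)
    then show "(D + E) s = apply_rxn r (C + E) s"
      unfolding r(3) apply_rxn_def by simp
  qed
  ultimately show ?thesis
    using r(1) unfolding step_def applicable_def by blast
qed

lemma reachable_add_right:
  assumes "reachable Rs C D"
  shows "reachable Rs (C + E) (D + E)"
  using assms unfolding reachable_def
proof (induction rule: rtranclp_induct)
  case base
  then show ?case by simp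
next
  case (step D F)
  from step.IH step_add_right[OF step.hyps(2), of E] show ?case
    by (metis rtranclp.rtrancl_into_rtrancl)
qed

lemma reachable_add:
  assumes "reachable Rs C D" and "reachable Rs C' D'"
  shows "reachable Rs (C + C') (D + D')"
proof -
  have "reachable Rs (C + C') (D + C')"
    using reachable_add_right[OF assms(1)] .
  moreover have "reachable Rs (C' + D) (D' + D)"
    using reachable_add_right[OF assms(2)] .
  ultimately show ?thesis
    unfolding reachable_def by (simp add: add.commute)
qed

lemma reachable_output_mono:
  assumes "reachable Rs C D" and "output_oblivious Rs Y"
  shows "C Y \<le> D Y"
  using assms(1) unfolding reachable_def
proof (induction rule: rtranclp_induct)
  case base
  then show ?case by simp
next
  case (step D F)
  then obtain r where "r \<in> Rs" "F = apply_rxn r D"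
    unfolding step_def by blast
  then have "D Y \<le> F Y"
    using assms(2) unfolding output_oblivious_def apply_rxn_def by auto
  with step.IH show ?case by linarith
qed

lemma init_config_add: "init_config X (x + y) = init_config X x + init_config X y"
  unfolding init_config_def by (auto simp: fun_eq_iff)

lemma stably_computes_reaches_output:
  assumes "stably_computes Rs X Y f"
  shows "\<exists>D. reachable Rs (init_config X x) D \<and> D Y = f x"
  using assms unfolding stably_computes_def reachable_def by blast

theorem mainTheorem6:
  fixes f :: "nat ^ 'd \<Rightarrow> nat"
  assumes "obliviously_computable f"
  shows "\<forall>x y. f x + f y \<le> f (x + y)"
proof (intro allI)
  fix x y
  from assms obtain Rs :: "nat reaction set" and X :: "'d \<Rightarrow> nat" and Y where
    oblivious: "output_oblivious Rs Y" and computes: "stably_computes Rs X Y f"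
    unfolding obliviously_computable_def by blast
  obtain Ox where Ox: "reachable Rs (init_config X x) Ox" "Ox Y = f x"
    using stably_computes_reaches_output[OF computes] by blast
  obtain Oy where Oy: "reachable Rs (init_config X y) Oy" "Oy Y = f y"
    using stably_computes_reaches_output[OF computes] by blast
  have "reachable Rs (init_config X (x + y)) (Ox + Oy)"
    unfolding init_config_add using reachable_add[OF Ox(1) Oy(1)] .
  then obtain Oz where Oz: "reachable Rs (Ox + Oy) Oz" "Oz Y = f (x + y)"
    using computes unfolding stably_computes_def by blast
  have "(Ox + Oy) Y \<le> Oz Y"
    using reachable_output_mono[OF Oz(1) oblivious] .
  then show "f x + f y \<le> f (x + y)"
    using Ox(2) Oy(2) Oz(2) by simp
qed

end
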